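(* Let $(u_1,\dots,u_k)$ be a tuple of linearly independent pairwise orthogonal vectors of $\mathbb{C}^n$. Then for every $\epsilon>0$ there is a tuple $(v_1(\epsilon),\dots,v_k(\epsilon))$ of pairwise orthogonal vectors of $\mathbb{C}^n$ with $\langle v_j(\epsilon),v_j(\epsilon)\rangle\neq 0$ for all $j$, such that $\lim_{\epsilon\to 0}v_j(\epsilon)=u_j$ for all $j=1,\dots,k$.
   Context: $\langle x,y\rangle=\sum_i x_iy_i$ is the bilinear (non-Hermitian) form on $\mathbb{C}^n$, and orthogonality of vectors refers to this form. *)

theory Defs
  imports "HOL-Analysis.Analysis"
begin

text \<open>The bilinear (non-Hermitian) form on complex n-space.\<close>
definition cbil :: "complex^'n \<Rightarrow> complex^'n \<Rightarrow> complex" where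
  "cbil x y = (\<Sum>i\<in>UNIV. x $ i * y $ i)"

definition clin_indep_tuple :: "nat \<Rightarrow> (nat \<Rightarrow> complex^'n) \<Rightarrow> bool" where
  "clin_indep_tuple k u \<longleftrightarrow>
     (\<forall>c :: nat \<Rightarrow> complex. (\<Sum>j<k. c j *s u j) = 0 \<longrightarrow> (\<forall>j<k. c j = 0))"

end

theory Submission
  imports Defs
begin

text \<open>
  By independence there are dual vectors \<open>y\<^sub>j\<close> with \<open>\<langle>y\<^sub>j, u\<^sub>i\<rangle> = \<delta>\<^sub>i\<^sub>j\<close>. Let \<open>I\<close> be the set of
  isotropic indices (\<open>\<langle>u\<^sub>j, u\<^sub>j\<rangle> = 0\<close>). For \<open>j \<in> I\<close> put
  \<open>z\<^sub>j = y\<^sub>j - \<onehalf> \<Sum>\<^sub>m\<^sub>\<in>\<^sub>I \<langle>y\<^sub>j, y\<^sub>m\<rangle> u\<^sub>m\<close>, and \<open>z\<^sub>j = 0\<close> otherwise. Since every \<open>u\<^sub>m\<close> with \<open>m \<in> I\<close>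
  is orthogonal to all \<open>u\<^sub>i\<close>, still \<open>\<langle>u\<^sub>i, z\<^sub>j\<rangle> = \<delta>\<^sub>i\<^sub>j [j \<in> I]\<close>, and the correction term makes the
  \<open>z\<^sub>j\<close> totally isotropic: \<open>\<langle>z\<^sub>i, z\<^sub>j\<rangle> = 0\<close>. Hence \<open>v\<^sub>j(\<epsilon>) = u\<^sub>j + \<epsilon> z\<^sub>j\<close> satisfies
  \<open>\<langle>v\<^sub>i(\<epsilon>), v\<^sub>j(\<epsilon>)\<rangle> = \<langle>u\<^sub>i, u\<^sub>j\<rangle> + 2\<epsilon> \<delta>\<^sub>i\<^sub>j [j \<in> I]\<close>.
\<close>

lemma cbil_sym: "cbil x y = cbil y x"
  unfolding cbil_def by (simp add: mult.commute)

lemma cbil_add_left: "cbil (x + y) z = cbil x z + cbil y z"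
  unfolding cbil_def by (simp add: distrib_right sum.distrib)

lemma cbil_add_right: "cbil z (x + y) = cbil z x + cbil z y"
  unfolding cbil_def by (simp add: distrib_left sum.distrib)

lemma cbil_diff_left: "cbil (x - y) z = cbil x z - cbil y z"
  unfolding cbil_def by (simp add: left_diff_distrib sum_subtractf)

lemma cbil_diff_right: "cbil z (x - y) = cbil z x - cbil z y"
  unfolding cbil_def by (simp add: right_diff_distrib sum_subtractf)

lemma cbil_scale_left: "cbil (c *s x) z = c * cbil x z"
  unfolding cbil_def by (simp add: sum_distrib_left mult.assoc)

lemma cbil_scale_right: "cbil z (c *s x) = c * cbil z x"
  unfolding cbil_def by (simp add: sum_distrib_left algebra_simps)

lemma cbil_scaleR_left: "cbil (r *\<^sub>R x) z = of_real r * cbil x z"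
  unfolding cbil_def vector_scaleR_component by (simp add: sum_distrib_left mult.assoc scaleR_conv_of_real)

lemma cbil_scaleR_right: "cbil z (r *\<^sub>R x) = of_real r * cbil z x"
  by (simp add: cbil_sym[of z] cbil_scaleR_left)

lemma cbil_zero_left [simp]: "cbil 0 z = 0" and cbil_zero_right [simp]: "cbil z 0 = 0"
  by (simp_all add: cbil_def)

lemma cbil_sum_left: "cbil (\<Sum>m\<in>A. f m) z = (\<Sum>m\<in>A. cbil (f m) z)"
  by (induction A rule: infinite_finite_induct) (simp_all add: cbil_add_left)

lemma cbil_sum_right: "cbil z (\<Sum>m\<in>A. f m) = (\<Sum>m\<in>A. cbil z (f m))"
  by (simp add: cbil_sym[of z] cbil_sum_left)

lemma linear_functional_eq_cbil:
  fixes f :: "complex^'n \<Rightarrow> complex"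
  assumes "Vector_Spaces.linear (*s) (*) f"
  shows "\<exists>x. \<forall>y. f y = cbil x y"
proof -
  interpret Vector_Spaces.linear "(*s)" "(*)" f by fact
  have "f y = cbil (\<chi> i. f (axis i 1)) y" for y
  proof -
    have "f y = f (\<Sum>i\<in>UNIV. y $ i *s axis i 1)" by (simp add: basis_expansion)
    also have "\<dots> = (\<Sum>i\<in>UNIV. y $ i * f (axis i 1))" by (simp add: sum scale)
    finally show ?thesis by (simp add: cbil_def mult.commute)
  qed
  then show ?thesis by blast
qed

lemma clin_indep_tuple_inj_on:
  assumes "clin_indep_tuple k u"
  shows "inj_on u {..<k}"
proof (rule inj_onI, rule ccontr)
  fix a b assume a: "a \<in> {..<k}" and b: "b \<in> {..<k}" and eq: "u a = u b" and "a \<noteq> b"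
  define c where "c m = (if m = a then 1 else if m = b then -1 else 0 :: complex)" for m
  have "(\<Sum>m<k. c m *s u m) = (\<Sum>m\<in>{a, b}. c m *s u m)"
    by (rule sum.mono_neutral_right) (use a b in \<open>auto simp: c_def\<close>)
  also have "\<dots> = 0" using \<open>a \<noteq> b\<close> eq by (simp add: c_def)
  finally have "c a = 0" using assms a unfolding clin_indep_tuple_def by blast
  then show False by (simp add: c_def)
qed

lemma clin_indep_tuple_independent:
  assumes "clin_indep_tuple k u"
  shows "vec.independent (u ` {..<k})"
proof (rule vec.independent_if_scalars_zero)
  fix f x assume sum_zero: "(\<Sum>x\<in>u ` {..<k}. f x *s x) = 0" and x: "x \<in> u ` {..<k}"
  have "(\<Sum>m<k. f (u m) *s u m) = 0"
    using sum_zero by (simp add: sum.reindex[OF clin_indep_tuple_inj_on[OF assms]])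
  then show "f x = 0" using assms x unfolding clin_indep_tuple_def by auto
qed simp

lemma clin_indep_tuple_dual:
  fixes u :: "nat \<Rightarrow> complex^'n"
  assumes "clin_indep_tuple k u"
  shows "\<exists>y. \<forall>i<k. \<forall>j<k. cbil (y j) (u i) = (if i = j then 1 else 0)"
proof -
  interpret vector_space_pair "(*s) :: complex \<Rightarrow> complex^'n \<Rightarrow> _" "(*) :: complex \<Rightarrow> complex \<Rightarrow> complex" ..
  have inj: "inj_on u {..<k}" by (rule clin_indep_tuple_inj_on[OF assms])
  have "\<exists>x. \<forall>i<k. cbil x (u i) = (if i = j then 1 else 0)" if "j < k" for j
  proof -
    obtain g where "Vector_Spaces.linear (*s) (*) g"
      and g: "\<forall>w\<in>u ` {..<k}. g w = (if w = u j then 1 else 0)"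
      using linear_independent_extend[OF clin_indep_tuple_independent[OF assms],
          of "\<lambda>w. if w = u j then 1 else 0"] by blast
    then obtain x where "\<forall>w. g w = cbil x w" using linear_functional_eq_cbil by blast
    moreover have "u i = u j \<longleftrightarrow> i = j" if "i < k" for i
      using inj \<open>j < k\<close> that by (auto dest: inj_onD)
    ultimately have "\<forall>i<k. cbil x (u i) = (if i = j then 1 else 0)" using g by auto
    then show ?thesis ..
  qed
  then show ?thesis by metis
qed

lemma isotropic_correction_exists:
  fixes u :: "nat \<Rightarrow> complex^'n"
  assumes indep: "clin_indep_tuple k u"
    and orth: "\<forall>i<k. \<forall>j<k. i \<noteq> j \<longrightarrow> cbil (u i) (u j) = 0"
  shows "\<exists>z. (\<forall>i<k. \<forall>j. cbil (u i) (z j) = (if i = j \<and> cbil (u j) (u j) = 0 then 1 else 0))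
             \<and> (\<forall>i j. cbil (z i) (z j) = 0)"
proof -
  obtain y where y: "\<And>i j. i < k \<Longrightarrow> j < k \<Longrightarrow> cbil (y j) (u i) = (if i = j then 1 else 0)"
    using clin_indep_tuple_dual[OF indep] by blast
  define I where "I = {j. j < k \<and> cbil (u j) (u j) = 0}"
  define S where "S j = (\<Sum>m\<in>I. cbil (y j) (y m) *s u m)" for j
  define z where "z j = (if j \<in> I then y j - (1/2) *s S j else 0)" for j
  have u_S: "cbil (u i) (S j) = 0" if "i < k" for i j
  proof -
    have "cbil (u i) (u m) = 0" if "m \<in> I" for m
      using orth \<open>i < k\<close> that by (cases "i = m") (auto simp: I_def)
    then show ?thesis by (simp add: S_def cbil_sum_right cbil_scale_right)
  qed
  have y_S: "cbil (y i) (S j) = cbil (y j) (y i)" if "i \<in> I" for i j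
  proof -
    have "cbil (y i) (S j) = (\<Sum>m\<in>I. cbil (y j) (y m) * (if m = i then 1 else 0))"
      unfolding S_def cbil_sum_right cbil_scale_right
      by (rule sum.cong) (use that in \<open>auto simp: y I_def\<close>)
    also have "\<dots> = cbil (y j) (y i)" using that
      by (simp add: if_distrib[where f="\<lambda>x. _ * x"] sum.delta I_def cong: if_cong)
    finally show ?thesis .
  qed
  have S_S: "cbil (S i) (S j) = 0" for i j
    by (simp add: S_def[of i] cbil_sum_left cbil_scale_left u_S I_def)
  have "cbil (u i) (z j) = (if i = j \<and> cbil (u j) (u j) = 0 then 1 else 0)" if "i < k" for i j
  proof (cases "j \<in> I")
    case True
    then have "cbil (u i) (y j) = (if i = j then 1 else 0)"
      using y[of i j] \<open>i < k\<close> by (simp add: cbil_sym[of "u i"] I_def)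
    then show ?thesis using True u_S[OF that] by (auto simp: z_def cbil_diff_right cbil_scale_right I_def)
  qed (use that in \<open>auto simp: z_def I_def\<close>)
  moreover have "cbil (z i) (z j) = 0" for i j
  proof (cases "i \<in> I \<and> j \<in> I")
    case True
    then have "cbil (z i) (z j) = cbil (y i) (y j) - (1/2) * cbil (y i) (S j)
        - (1/2) * cbil (S i) (y j) + (1/4) * cbil (S i) (S j)"
      by (simp add: z_def cbil_diff_right cbil_diff_left cbil_scale_left cbil_scale_right algebra_simps)
    also have "\<dots> = 0"
      using True y_S[of i j] y_S[of j i] S_S[of i j] by (simp add: cbil_sym[of "S i"] cbil_sym[of "y j" "y i"])
    finally show ?thesis .
  qed (auto simp: z_def)
  ultimately show ?thesis by blast
qed

lemma cbil_perturb:
  "cbil (u + \<epsilon> *\<^sub>R z) (u' + \<epsilon> *\<^sub>R z') = cbil u u' + of_real \<epsilon> * (cbil u z' + cbil u' z)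
     + of_real \<epsilon> ^ 2 * cbil z z'"
proof -
  have "cbil z u' = cbil u' z" by (rule cbil_sym)
  then show ?thesis
    by (simp add: cbil_add_left cbil_add_right cbil_scaleR_left cbil_scaleR_right power2_eq_square ring_distribs)
qed

theorem lemma22:
  fixes k :: nat and u :: "nat \<Rightarrow> complex^'n"
  assumes "clin_indep_tuple k u"
    and "\<forall>i<k. \<forall>j<k. i \<noteq> j \<longrightarrow> cbil (u i) (u j) = 0"
  shows "\<exists>v :: real \<Rightarrow> nat \<Rightarrow> complex^'n.
           (\<forall>\<epsilon>>0. (\<forall>i<k. \<forall>j<k. i \<noteq> j \<longrightarrow> cbil (v \<epsilon> i) (v \<epsilon> j) = 0)
                 \<and> (\<forall>j<k. cbil (v \<epsilon> j) (v \<epsilon> j) \<noteq> 0))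
         \<and> (\<forall>j<k. ((\<lambda>\<epsilon>. v \<epsilon> j) \<longlongrightarrow> u j) (at_right 0))"
proof -
  obtain z where u_z: "\<And>i j. i < k \<Longrightarrow> cbil (u i) (z j) = (if i = j \<and> cbil (u j) (u j) = 0 then 1 else 0)"
    and z_z: "\<And>i j. cbil (z i) (z j) = 0"
    using isotropic_correction_exists[OF assms] by blast
  define v where "v \<epsilon> j = u j + \<epsilon> *\<^sub>R z j" for \<epsilon> :: real and j
  have "cbil (v \<epsilon> i) (v \<epsilon> j) = 0" if "i < k" "j < k" "i \<noteq> j" for \<epsilon> i j
    using that assms(2) by (simp add: v_def cbil_perturb u_z z_z)
  moreover have "cbil (v \<epsilon> j) (v \<epsilon> j) \<noteq> 0" if "\<epsilon> > 0" "j < k" for \<epsilon> j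
    using that by (cases "cbil (u j) (u j) = 0") (simp_all add: v_def cbil_perturb u_z z_z)
  moreover have "((\<lambda>\<epsilon>. v \<epsilon> j) \<longlongrightarrow> u j) (at_right 0)" for j
  proof -
    have "((\<lambda>\<epsilon>::real. u j + \<epsilon> *\<^sub>R z j) \<longlongrightarrow> u j + 0 *\<^sub>R z j) (at_right 0)"
      by (intro tendsto_intros)
    then show ?thesis by (simp add: v_def)
  qed
  ultimately show ?thesis by blast
qed

end
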